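(* Let $n\ge 2$ be even and $k\ge 3$. Then every Jenga-like configuration $Q$ of the $(n,k)$-game satisfies $$ g(Q)\le \frac{n(n-2)(k-2)}{2}. $$
   Context: The $(n,k)$-game is played with $nk$ blocks, each a box of length $n$, width $1$, height $1$. Level $i$ occupies heights $[i-1,i]$ and has $n$ slots $j=1,\dots,n$; a block in slot $j$ of an odd level $i$ is $[0,n]\times[j-1,j]\times[i-1,i]$, and of an even level $i$ is $[j-1,j]\times[0,n]\times[i-1,i]$. The initial configuration has $k$ full levels. A move removes exactly one block from a level which is not the topmost level and, when the topmost level is incomplete (fewer than $n$ blocks), is not the level immediately below the topmost level, and places it in an empty slot of the topmost level if that level is incomplete, or in a slot of a new level on top otherwise. A Jenga-like configuration is one obtainable from the initial configuration by finitely many moves in which every level up to the topmost contains at least one block. $g(Q)$ is the genus of the boundary surface of the union of the blocks of $Q$ (a connected closed polyhedral surface). *)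

theory Defs
  imports Complex_Main
begin

type_synonym point = "int \<times> int \<times> int"

(* A configuration: list of levels (index p = level p+1), each level is the set of
   occupied slots, slots numbered 0..n-1 (slot s = slot j = s+1 of the paper). *)
type_synonym config = "nat set list"

definition initial_config :: "nat \<Rightarrow> nat \<Rightarrow> config" where
  "initial_config n k = replicate k {0..<n}"

definition jenga_move :: "nat \<Rightarrow> config \<Rightarrow> config \<Rightarrow> bool" where
  "jenga_move n Q Q' \<longleftrightarrow>
     (\<exists>i j s. i < length Q - 1
        \<and> (card (last Q) < n \<longrightarrow> i \<noteq> length Q - 2)
        \<and> j \<in> Q ! i \<and> s < n
        \<and> (let Q1 = Q[i := Q ! i - {j}] in
             if card (last Q) < n
             then s \<notin> last Q \<and> Q' = butlast Q1 @ [insert s (last Q)]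
             else Q' = Q1 @ [{s}]))"

definition jenga_like :: "nat \<Rightarrow> nat \<Rightarrow> config \<Rightarrow> bool" where
  "jenga_like n k Q \<longleftrightarrow>
     (jenga_move n)\<^sup>*\<^sup>* (initial_config n k) Q \<and> (\<forall>i < length Q. Q ! i \<noteq> {})"

(* unit cubes [a,a+1]x[b,b+1]x[c,c+1] (lower corner (a,b,c)) making up the blocks.
   Level p+1 odd (p even): block in slot s is [0,n]x[s,s+1]x[p,p+1];
   level p+1 even (p odd): block in slot s is [s,s+1]x[0,n]x[p,p+1]. *)
definition cubes :: "nat \<Rightarrow> config \<Rightarrow> point set" where
  "cubes n Q = {(a, b, c) | a b c. 0 \<le> a \<and> 0 \<le> b \<and> 0 \<le> c \<and> nat c < length Q \<and>
      ((even (nat c) \<and> nat b \<in> Q ! nat c \<and> a < int n) \<or>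
       (odd (nat c) \<and> nat a \<in> Q ! nat c \<and> b < int n))}"

definition corners :: "point \<Rightarrow> point set" where
  "corners p = (case p of (a, b, c) \<Rightarrow>
     {(a + dx, b + dy, c + dz) | dx dy dz. dx \<in> {0, 1} \<and> dy \<in> {0, 1} \<and> dz \<in> {0, 1}})"

definition addp :: "point \<Rightarrow> point \<Rightarrow> point" where
  "addp p q = (case p of (a, b, c) \<Rightarrow> case q of (x, y, z) \<Rightarrow> (a + x, b + y, c + z))"

definition unit_dirs :: "point set" where
  "unit_dirs = {(1,0,0), (-1,0,0), (0,1,0), (0,-1,0), (0,0,1), (0,0,-1)}"

definition l1dist :: "point \<Rightarrow> point \<Rightarrow> int" where
  "l1dist p q = (case p of (a, b, c) \<Rightarrow> case q of (x, y, z) \<Rightarrow> \<bar>a - x\<bar> + \<bar>b - y\<bar> + \<bar>c - z\<bar>)"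

definition bfaces :: "nat \<Rightarrow> config \<Rightarrow> point set set" where
  "bfaces n Q = {corners p \<inter> corners (addp p d) | p d.
      p \<in> cubes n Q \<and> d \<in> unit_dirs \<and> addp p d \<notin> cubes n Q}"

definition bedges :: "nat \<Rightarrow> config \<Rightarrow> point set set" where
  "bedges n Q = {{u, v} | u v F. F \<in> bfaces n Q \<and> u \<in> F \<and> v \<in> F \<and> l1dist u v = 1}"

definition bverts :: "nat \<Rightarrow> config \<Rightarrow> point set" where
  "bverts n Q = \<Union> (bfaces n Q)"

definition euler_char :: "nat \<Rightarrow> config \<Rightarrow> int" where
  "euler_char n Q = int (card (bverts n Q)) - int (card (bedges n Q)) + int (card (bfaces n Q))"

(* genus of a closed connected orientable surface: chi = 2 - 2g *)
definition genus :: "nat \<Rightarrow> config \<Rightarrow> real" where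
  "genus n Q = (2 - real_of_int (euler_char n Q)) / 2"

end

theory Submission
  imports Defs
begin

(*
  Cut the boundary surface into the unit squares, unit segments and lattice points it
  contains, and sort these cells by the height of their lowest point.  The cells at height c
  only see the levels c - 1 and c (counted from 0), and since consecutive levels are
  perpendicular, each kind of them is counted by a product formula in the sizes of these two
  levels and of their runs (maximal blocks of consecutive occupied slots).  Altogether the
  cells at height c contribute r(c-1) + r(c) - 2 r(c-1) r(c) to the Euler characteristic,
  where r(c) is the number of runs of level c; hence g = 1 + sum_c r(c) (r(c+1) - 1).
  In a reachable configuration the level below the top is full, so the top three levels
  contribute -1 to this sum, while every lower level c has r(c) <= |level c| and
  r(c+1) <= n/2.  The lower levels hold at most n (k - 2) blocks, so g <= (n/2 - 1) n (k - 2).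
*)

lemma card_Un_image3:
  assumes "finite A" "finite B" "finite C" "inj f" "inj g" "inj h"
    "range f \<inter> range g = {}" "range f \<inter> range h = {}" "range g \<inter> range h = {}"
  shows "card (f ` A \<union> g ` B \<union> h ` C) = card A + card B + card C"
proof -
  have "(f ` A \<union> g ` B) \<inter> h ` C = {}" "f ` A \<inter> g ` B = {}"
    using assms(7-9) by (simp_all add: Int_Un_distrib2 disjoint_iff image_iff) metis+
  then have "card (f ` A \<union> g ` B \<union> h ` C) = card (f ` A) + card (g ` B) + card (h ` C)"
    using assms(1-3) by (simp add: card_Un_disjoint)
  with assms(4-6) show ?thesis by (simp add: card_image inj_on_subset)
qed

lemma card_Times_Diff:
  assumes "finite P" "finite Q" "R \<subseteq> P" "T \<subseteq> Q"
  shows "int (card (P \<times> Q - R \<times> T)) = int (card P) * int (card Q) - int (card R) * int (card T)"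
proof -
  have "R \<times> T \<subseteq> P \<times> Q" using assms(3,4) by auto
  moreover have "card (R \<times> T) \<le> card (P \<times> Q)"
    using calculation assms(1,2) by (intro card_mono) auto
  ultimately show ?thesis
    using assms(1,2) by (simp add: card_Diff_subset finite_subset card_cartesian_product of_nat_diff)
qed

lemma card_Times_Un_Diff:
  fixes P1 P2 R :: "'a set" and Q1 Q2 T :: "'b set"
  assumes "finite P1" "finite Q1" "finite P2" "finite Q2" "R \<subseteq> P1" "T \<subseteq> Q1"
  shows "int (card (P1 \<times> Q1 \<union> P2 \<times> Q2 - R \<times> T)) =
    int (card P1) * int (card Q1) + int (card P2) * int (card Q2)
    - int (card (P1 \<inter> P2)) * int (card (Q1 \<inter> Q2)) - int (card R) * int (card T)"
proof -
  let ?U = "P1 \<times> Q1 \<union> P2 \<times> Q2"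
  have "R \<times> T \<subseteq> ?U" "finite ?U"
    using assms by auto
  then have "card (?U - R \<times> T) + card R * card T = card ?U"
    by (metis card_Diff_subset card_cartesian_product card_mono finite_subset le_add_diff_inverse2)
  moreover have "card ?U + card (P1 \<inter> P2) * card (Q1 \<inter> Q2) = card P1 * card Q1 + card P2 * card Q2"
    using card_Un_Int[of "P1 \<times> Q1" "P2 \<times> Q2"] assms(1-4)
    by (simp add: Times_Int_Times card_cartesian_product)
  ultimately show ?thesis
    by (smt (verit) of_nat_add of_nat_mult)
qed

lemma sum_list_map_butlast:
  "xs \<noteq> [] \<Longrightarrow> sum_list (map f xs) = sum_list (map f (butlast xs)) + f (last xs)"
  by (induct xs rule: rev_induct) auto

section \<open>Runs of a set of integers\<close>

(* Reading x \<in> S as the unit interval [x, x+1]: covered_pts S are the lattice points of the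
   union of these intervals, inner_pts S those interior to it, and run_starts S the left ends
   of its connected components. *)
definition covered_pts :: "int set \<Rightarrow> int set" where
  "covered_pts S = {x. x - 1 \<in> S \<or> x \<in> S}"
definition inner_pts :: "int set \<Rightarrow> int set" where
  "inner_pts S = {x. x - 1 \<in> S \<and> x \<in> S}"
definition run_starts :: "int set \<Rightarrow> int set" where
  "run_starts S = {x. x \<in> S \<and> x - 1 \<notin> S}"

lemma covered_pts_mono: "S \<subseteq> T \<Longrightarrow> covered_pts S \<subseteq> covered_pts T"
  unfolding covered_pts_def by auto
lemma inner_pts_mono: "S \<subseteq> T \<Longrightarrow> inner_pts S \<subseteq> inner_pts T"
  unfolding inner_pts_def by auto
lemma inner_pts_subset: "inner_pts S \<subseteq> covered_pts S"
  unfolding inner_pts_def covered_pts_def by auto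

lemma finite_covered_pts: "finite S \<Longrightarrow> finite (covered_pts S)"
proof -
  assume "finite S"
  moreover have "covered_pts S \<subseteq> S \<union> (\<lambda>x. x + 1) ` S"
    unfolding covered_pts_def by (auto intro: image_eqI[of _ _ "_ - 1"])
  ultimately show ?thesis by (meson finite_Un finite_imageI finite_subset)
qed

lemma card_inner_pts:
  assumes "finite S" shows "int (card (inner_pts S)) = int (card S) - int (card (run_starts S))"
proof -
  have "S = inner_pts S \<union> run_starts S" "inner_pts S \<inter> run_starts S = {}"
    unfolding inner_pts_def run_starts_def by auto
  with assms have "card S = card (inner_pts S) + card (run_starts S)"
    by (metis card_Un_disjoint finite_Un)
  then show ?thesis by simp
qed

lemma card_covered_pts:
  assumes "finite S" shows "int (card (covered_pts S)) = int (card S) + int (card (run_starts S))"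
proof -
  let ?ends = "{x. x - 1 \<in> S \<and> x \<notin> S}"
  have shift: "(\<lambda>x. x + 1) ` S = inner_pts S \<union> ?ends"
    unfolding inner_pts_def by (auto intro: image_eqI[of _ _ "_ - 1"])
  have "finite ?ends"
    using finite_imageI[OF assms, of "\<lambda>x. x + 1"] unfolding shift by blast
  moreover have "finite (inner_pts S)"
    using assms unfolding inner_pts_def by auto
  moreover have "card ((\<lambda>x. x + 1) ` S) = card S"
    by (rule card_image) (auto simp: inj_on_def)
  ultimately have "card S = card (inner_pts S) + card ?ends"
    unfolding shift by (subst (asm) card_Un_disjoint) (auto simp: inner_pts_def)
  moreover have "covered_pts S = S \<union> ?ends" "S \<inter> ?ends = {}"
    unfolding covered_pts_def by auto
  then have "card (covered_pts S) = card S + card ?ends"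
    using assms \<open>finite ?ends\<close> by (simp add: card_Un_disjoint)
  ultimately show ?thesis
    using card_inner_pts[OF assms] by linarith
qed

lemma card_covered_pts_Diff_inner_pts:
  assumes "finite S" shows "int (card (covered_pts S - inner_pts S)) = 2 * int (card (run_starts S))"
  using card_covered_pts[OF assms] card_inner_pts[OF assms] inner_pts_subset[of S]
  by (simp add: card_Diff_subset finite_covered_pts[OF assms] finite_subset[OF inner_pts_subset]
      of_nat_diff)

lemma run_starts_interval: "1 \<le> n \<Longrightarrow> run_starts {0..<int n} = {0}"
  unfolding run_starts_def by auto

lemma card_run_starts_le: "finite S \<Longrightarrow> card (run_starts S) \<le> card S"
  by (rule card_mono) (auto simp: run_starts_def)

lemma card_run_starts_pos:
  assumes "finite S" "S \<noteq> {}" shows "0 < card (run_starts S)"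
proof -
  have "Min S \<in> run_starts S"
    using Min_in[OF assms] Min_le[OF assms(1), of "Min S - 1"] unfolding run_starts_def by force
  moreover have "finite (run_starts S)"
    using assms(1) unfolding run_starts_def by auto
  ultimately show ?thesis
    by (auto simp: card_gt_0_iff)
qed

lemma card_run_starts_half:
  assumes "S \<subseteq> {0..<int n}" "even n"
  shows "2 * card (run_starts S) \<le> n"
proof -
  \<comment> \<open>every run not starting at 0 is preceded by a free slot\<close>
  have fin: "finite S" "finite (run_starts S)"
    using finite_subset[OF assms(1)] unfolding run_starts_def by auto
  have "(\<lambda>x. x - 1) ` (run_starts S - {0}) \<subseteq> {0..<int n} - S"
    using assms(1) unfolding run_starts_def by auto
  moreover have "inj_on (\<lambda>x::int. x - 1) (run_starts S - {0})"
    by (auto simp: inj_on_def)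
  ultimately have "card (run_starts S - {0}) \<le> card ({0..<int n} - S)"
    by (metis card_image card_mono finite_Diff finite_atLeastLessThan_int)
  moreover have "card ({0..<int n} - S) = n - card S"
    using assms(1) fin(1) by (simp add: card_Diff_subset)
  moreover have "card (run_starts S) \<le> card (run_starts S - {0}) + 1"
    using fin(2) by (cases "0 \<in> run_starts S") (auto simp: card_Suc_Diff1)
  moreover have "card S \<le> n"
    using card_mono[OF _ assms(1)] by simp
  ultimately have "2 * card (run_starts S) \<le> n + 1"
    using card_run_starts_le[OF fin(1)] by linarith
  with assms(2) show ?thesis
    by presburger
qed

section \<open>Cells of the boundary surface\<close>

lemma corners_eq: "corners (a, b, c) = {a..a+1} \<times> {b..b+1} \<times> {c..c+1}"
proof -
  have "x \<in> {u..u+1} \<longleftrightarrow> (\<exists>d\<in>{0,1}. x = u + d)" for x u :: int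
    by (auto intro: bexI[of _ "x - u"])
  then show ?thesis unfolding corners_def by fastforce
qed

definition xsquare :: "int \<Rightarrow> int \<Rightarrow> int \<Rightarrow> point set" where
  "xsquare a b c = {a} \<times> {b..b+1} \<times> {c..c+1}"
definition ysquare :: "int \<Rightarrow> int \<Rightarrow> int \<Rightarrow> point set" where
  "ysquare a b c = {a..a+1} \<times> {b} \<times> {c..c+1}"
definition zsquare :: "int \<Rightarrow> int \<Rightarrow> int \<Rightarrow> point set" where
  "zsquare a b c = {a..a+1} \<times> {b..b+1} \<times> {c}"

lemma corners_Int_corners:
  "corners (a, b, c) \<inter> corners (a+1, b, c) = xsquare (a+1) b c"
  "corners (a, b, c) \<inter> corners (a-1, b, c) = xsquare a b c"
  "corners (a, b, c) \<inter> corners (a, b+1, c) = ysquare a (b+1) c"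
  "corners (a, b, c) \<inter> corners (a, b-1, c) = ysquare a b c"
  "corners (a, b, c) \<inter> corners (a, b, c+1) = zsquare a b (c+1)"
  "corners (a, b, c) \<inter> corners (a, b, c-1) = zsquare a b c"
  unfolding corners_eq xsquare_def ysquare_def zsquare_def Times_Int_Times by auto

definition xfaces :: "nat \<Rightarrow> config \<Rightarrow> point set" where
  "xfaces n Q = {(a, b, c). ((a-1, b, c) \<in> cubes n Q) \<noteq> ((a, b, c) \<in> cubes n Q)}"
definition yfaces :: "nat \<Rightarrow> config \<Rightarrow> point set" where
  "yfaces n Q = {(a, b, c). ((a, b-1, c) \<in> cubes n Q) \<noteq> ((a, b, c) \<in> cubes n Q)}"
definition zfaces :: "nat \<Rightarrow> config \<Rightarrow> point set" where
  "zfaces n Q = {(a, b, c). ((a, b, c-1) \<in> cubes n Q) \<noteq> ((a, b, c) \<in> cubes n Q)}"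

lemma bfaces_eq: "bfaces n Q =
  (\<lambda>(a, b, c). xsquare a b c) ` xfaces n Q \<union> (\<lambda>(a, b, c). ysquare a b c) ` yfaces n Q \<union>
  (\<lambda>(a, b, c). zsquare a b c) ` zfaces n Q" (is "_ = ?R")
proof
  have image_mem: "(a, b, c) \<in> xfaces n Q \<Longrightarrow> xsquare a b c \<in> ?R"
    "(a, b, c) \<in> yfaces n Q \<Longrightarrow> ysquare a b c \<in> ?R"
    "(a, b, c) \<in> zfaces n Q \<Longrightarrow> zsquare a b c \<in> ?R" for a b c
    by (auto intro: rev_image_eqI)
  show "bfaces n Q \<subseteq> ?R"
  proof
    fix f assume "f \<in> bfaces n Q"
    then obtain a b c d where p: "(a, b, c) \<in> cubes n Q" "addp (a, b, c) d \<notin> cubes n Q" "d \<in> unit_dirs"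
      and f: "f = corners (a, b, c) \<inter> corners (addp (a, b, c) d)"
      unfolding bfaces_def by auto
    from \<open>d \<in> unit_dirs\<close> consider "d = (1, 0, 0)" | "d = (-1, 0, 0)" | "d = (0, 1, 0)"
      | "d = (0, -1, 0)" | "d = (0, 0, 1)" | "d = (0, 0, -1)"
      unfolding unit_dirs_def by blast
    then show "f \<in> ?R"
      by cases (use p in \<open>simp only: f addp_def prod.case add_0_right add_uminus_conv_diff
          corners_Int_corners; intro image_mem; simp add: xfaces_def yfaces_def zfaces_def\<close>)+
  qed
next
  have dirs: "(1, 0, 0) \<in> unit_dirs" "(-1, 0, 0) \<in> unit_dirs" "(0, 1, 0) \<in> unit_dirs"
    "(0, -1, 0) \<in> unit_dirs" "(0, 0, 1) \<in> unit_dirs" "(0, 0, -1) \<in> unit_dirs"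
    by (simp_all add: unit_dirs_def)
  have face: "corners p \<inter> corners (addp p d) \<in> bfaces n Q"
    if "p \<in> cubes n Q" "d \<in> unit_dirs" "addp p d \<notin> cubes n Q" for p d
    using that unfolding bfaces_def by blast
  have "xsquare a b c \<in> bfaces n Q" if "(a, b, c) \<in> xfaces n Q" for a b c
    using that face[of "(a, b, c)" "(-1, 0, 0)"] face[of "(a-1, b, c)" "(1, 0, 0)"] dirs
    unfolding xfaces_def
    by (simp only: addp_def prod.case add_0_right add_uminus_conv_diff corners_Int_corners) auto
  moreover have "ysquare a b c \<in> bfaces n Q" if "(a, b, c) \<in> yfaces n Q" for a b c
    using that face[of "(a, b, c)" "(0, -1, 0)"] face[of "(a, b-1, c)" "(0, 1, 0)"] dirs
    unfolding yfaces_def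
    by (simp only: addp_def prod.case add_0_right add_uminus_conv_diff corners_Int_corners) auto
  moreover have "zsquare a b c \<in> bfaces n Q" if "(a, b, c) \<in> zfaces n Q" for a b c
    using that face[of "(a, b, c)" "(0, 0, -1)"] face[of "(a, b, c-1)" "(0, 0, 1)"] dirs
    unfolding zfaces_def
    by (simp only: addp_def prod.case add_0_right add_uminus_conv_diff corners_Int_corners) auto
  ultimately show "?R \<subseteq> bfaces n Q"
    by auto
qed

definition xsegment :: "int \<Rightarrow> int \<Rightarrow> int \<Rightarrow> point set" where
  "xsegment a b c = {(a, b, c), (a+1, b, c)}"
definition ysegment :: "int \<Rightarrow> int \<Rightarrow> int \<Rightarrow> point set" where
  "ysegment a b c = {(a, b, c), (a, b+1, c)}"
definition zsegment :: "int \<Rightarrow> int \<Rightarrow> int \<Rightarrow> point set" where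
  "zsegment a b c = {(a, b, c), (a, b, c+1)}"

lemma atLeastAtMost_plus1_iff: "x \<in> {a..a+1} \<longleftrightarrow> x = a \<or> x = a + (1::int)"
  by auto

lemma unit_square_sides:
  fixes y z y' z' b c :: int
  assumes "y \<in> {b..b+1}" "y' \<in> {b..b+1}" "z \<in> {c..c+1}" "z' \<in> {c..c+1}" "\<bar>y - y'\<bar> + \<bar>z - z'\<bar> = 1"
  shows "(z = z' \<and> {y, y'} = {b, b+1}) \<or> (y = y' \<and> {z, z'} = {c, c+1})"
  using assms by (auto simp: atLeastAtMost_plus1_iff)

lemma sides_xsquare:
  assumes "u \<in> xsquare a b c" "v \<in> xsquare a b c" "l1dist u v = 1"
  shows "{u, v} \<in> {ysegment a b c, ysegment a b (c+1), zsegment a b c, zsegment a (b+1) c}"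
proof -
  obtain y z y' z' where uv: "u = (a, y, z)" "v = (a, y', z')"
    and r: "y \<in> {b..b+1}" "y' \<in> {b..b+1}" "z \<in> {c..c+1}" "z' \<in> {c..c+1}"
    using assms(1,2) unfolding xsquare_def by auto
  from unit_square_sides[OF r] assms(3) consider
    "z' = z" "{y, y'} = {b, b+1}" | "y' = y" "{z, z'} = {c, c+1}"
    unfolding uv l1dist_def by auto
  then show ?thesis
  proof cases
    case 1
    have "{u, v} = (\<lambda>t. (a, t, z)) ` {y, y'}" unfolding uv 1(1) by simp
    then have "{u, v} = ysegment a b z" unfolding 1(2) ysegment_def by simp
    moreover have "z = c \<or> z = c + 1" using r(3) by auto
    ultimately show ?thesis by auto
  next
    case 2
    have "{u, v} = (\<lambda>t. (a, y, t)) ` {z, z'}" unfolding uv 2(1) by simp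
    then have "{u, v} = zsegment a y c" unfolding 2(2) zsegment_def by simp
    moreover have "y = b \<or> y = b + 1" using r(1) by auto
    ultimately show ?thesis by auto
  qed
qed

lemma sides_ysquare:
  assumes "u \<in> ysquare a b c" "v \<in> ysquare a b c" "l1dist u v = 1"
  shows "{u, v} \<in> {xsegment a b c, xsegment a b (c+1), zsegment a b c, zsegment (a+1) b c}"
proof -
  obtain x z x' z' where uv: "u = (x, b, z)" "v = (x', b, z')"
    and r: "x \<in> {a..a+1}" "x' \<in> {a..a+1}" "z \<in> {c..c+1}" "z' \<in> {c..c+1}"
    using assms(1,2) unfolding ysquare_def by auto
  from unit_square_sides[OF r] assms(3) consider
    "z' = z" "{x, x'} = {a, a+1}" | "x' = x" "{z, z'} = {c, c+1}"
    unfolding uv l1dist_def by auto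
  then show ?thesis
  proof cases
    case 1
    have "{u, v} = (\<lambda>t. (t, b, z)) ` {x, x'}" unfolding uv 1(1) by simp
    then have "{u, v} = xsegment a b z" unfolding 1(2) xsegment_def by simp
    moreover have "z = c \<or> z = c + 1" using r(3) by auto
    ultimately show ?thesis by auto
  next
    case 2
    have "{u, v} = (\<lambda>t. (x, b, t)) ` {z, z'}" unfolding uv 2(1) by simp
    then have "{u, v} = zsegment x b c" unfolding 2(2) zsegment_def by simp
    moreover have "x = a \<or> x = a + 1" using r(1) by auto
    ultimately show ?thesis by auto
  qed
qed

lemma sides_zsquare:
  assumes "u \<in> zsquare a b c" "v \<in> zsquare a b c" "l1dist u v = 1"
  shows "{u, v} \<in> {xsegment a b c, xsegment a (b+1) c, ysegment a b c, ysegment (a+1) b c}"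
proof -
  obtain x y x' y' where uv: "u = (x, y, c)" "v = (x', y', c)"
    and r: "x \<in> {a..a+1}" "x' \<in> {a..a+1}" "y \<in> {b..b+1}" "y' \<in> {b..b+1}"
    using assms(1,2) unfolding zsquare_def by auto
  from unit_square_sides[OF r] assms(3) consider
    "y' = y" "{x, x'} = {a, a+1}" | "x' = x" "{y, y'} = {b, b+1}"
    unfolding uv l1dist_def by auto
  then show ?thesis
  proof cases
    case 1
    have "{u, v} = (\<lambda>t. (t, y, c)) ` {x, x'}" unfolding uv 1(1) by simp
    then have "{u, v} = xsegment a y c" unfolding 1(2) xsegment_def by simp
    moreover have "y = b \<or> y = b + 1" using r(3) by auto
    ultimately show ?thesis by auto
  next
    case 2
    have "{u, v} = (\<lambda>t. (x, t, c)) ` {y, y'}" unfolding uv 2(1) by simp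
    then have "{u, v} = ysegment x b c" unfolding 2(2) ysegment_def by simp
    moreover have "x = a \<or> x = a + 1" using r(1) by auto
    ultimately show ?thesis by auto
  qed
qed

definition xedges :: "nat \<Rightarrow> config \<Rightarrow> point set" where
  "xedges n Q = {(a, b, c). (a, b, c) \<in> yfaces n Q \<or> (a, b, c-1) \<in> yfaces n Q \<or>
     (a, b, c) \<in> zfaces n Q \<or> (a, b-1, c) \<in> zfaces n Q}"
definition yedges :: "nat \<Rightarrow> config \<Rightarrow> point set" where
  "yedges n Q = {(a, b, c). (a, b, c) \<in> xfaces n Q \<or> (a, b, c-1) \<in> xfaces n Q \<or>
     (a, b, c) \<in> zfaces n Q \<or> (a-1, b, c) \<in> zfaces n Q}"
definition zedges :: "nat \<Rightarrow> config \<Rightarrow> point set" where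
  "zedges n Q = {(a, b, c). (a, b, c) \<in> xfaces n Q \<or> (a, b-1, c) \<in> xfaces n Q \<or>
     (a, b, c) \<in> yfaces n Q \<or> (a-1, b, c) \<in> yfaces n Q}"

lemma bedges_eq: "bedges n Q =
  (\<lambda>(a, b, c). xsegment a b c) ` xedges n Q \<union> (\<lambda>(a, b, c). ysegment a b c) ` yedges n Q \<union>
  (\<lambda>(a, b, c). zsegment a b c) ` zedges n Q" (is "_ = ?R")
proof
  have segs: "(a, b, c) \<in> xedges n Q \<Longrightarrow> xsegment a b c \<in> ?R"
    "(a, b, c) \<in> yedges n Q \<Longrightarrow> ysegment a b c \<in> ?R"
    "(a, b, c) \<in> zedges n Q \<Longrightarrow> zsegment a b c \<in> ?R" for a b c
    by (auto intro: rev_image_eqI)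
  show "bedges n Q \<subseteq> ?R"
  proof
    fix e assume "e \<in> bedges n Q"
    then obtain u v F where e: "e = {u, v}" and F: "F \<in> bfaces n Q" "u \<in> F" "v \<in> F"
      and uv: "l1dist u v = 1"
      unfolding bedges_def by blast
    from F(1) consider (x) a b c where "(a, b, c) \<in> xfaces n Q" "F = xsquare a b c"
      | (y) a b c where "(a, b, c) \<in> yfaces n Q" "F = ysquare a b c"
      | (z) a b c where "(a, b, c) \<in> zfaces n Q" "F = zsquare a b c"
      unfolding bfaces_eq by auto
    then show "e \<in> ?R"
    proof cases
      case x
      with sides_xsquare[of u a b c v] F uv
      have "{u, v} \<in> {ysegment a b c, ysegment a b (c+1), zsegment a b c, zsegment a (b+1) c}"
        by simp
      then show ?thesis unfolding e
        by (-, elim insertE emptyE; simp only:; intro segs; simp add: yedges_def zedges_def x(1))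
    next
      case y
      with sides_ysquare[of u a b c v] F uv
      have "{u, v} \<in> {xsegment a b c, xsegment a b (c+1), zsegment a b c, zsegment (a+1) b c}"
        by simp
      then show ?thesis unfolding e
        by (-, elim insertE emptyE; simp only:; intro segs; simp add: xedges_def zedges_def y(1))
    next
      case z
      with sides_zsquare[of u a b c v] F uv
      have "{u, v} \<in> {xsegment a b c, xsegment a (b+1) c, ysegment a b c, ysegment (a+1) b c}"
        by simp
      then show ?thesis unfolding e
        by (-, elim insertE emptyE; simp only:; intro segs; simp add: xedges_def yedges_def z(1))
    qed
  qed
next
  have sq: "(a, b, c) \<in> xfaces n Q \<Longrightarrow> xsquare a b c \<in> bfaces n Q"
    "(a, b, c) \<in> yfaces n Q \<Longrightarrow> ysquare a b c \<in> bfaces n Q"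
    "(a, b, c) \<in> zfaces n Q \<Longrightarrow> zsquare a b c \<in> bfaces n Q" for a b c
    unfolding bfaces_eq by (auto intro: rev_image_eqI)
  have side: "{u, v} \<in> bedges n Q" if "F \<in> bfaces n Q" "u \<in> F" "v \<in> F" "l1dist u v = 1" for F u v
    using that unfolding bedges_def by blast
  have "xsegment a b c \<in> bedges n Q" if "(a, b, c) \<in> xedges n Q" for a b c
  proof -
    let ?Fs = "{ysquare a b c, ysquare a b (c-1), zsquare a b c, zsquare a (b-1) c}"
    have "(a, b, c) \<in> F \<and> (a+1, b, c) \<in> F" if "F \<in> ?Fs" for F
      using that by (auto simp: ysquare_def zsquare_def)
    moreover have "\<exists>F \<in> ?Fs. F \<in> bfaces n Q"
      using \<open>(a, b, c) \<in> xedges n Q\<close> sq unfolding xedges_def by auto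
    ultimately show ?thesis unfolding xsegment_def using side by (force simp: l1dist_def)
  qed
  moreover have "ysegment a b c \<in> bedges n Q" if "(a, b, c) \<in> yedges n Q" for a b c
  proof -
    let ?Fs = "{xsquare a b c, xsquare a b (c-1), zsquare a b c, zsquare (a-1) b c}"
    have "(a, b, c) \<in> F \<and> (a, b+1, c) \<in> F" if "F \<in> ?Fs" for F
      using that by (auto simp: xsquare_def zsquare_def)
    moreover have "\<exists>F \<in> ?Fs. F \<in> bfaces n Q"
      using \<open>(a, b, c) \<in> yedges n Q\<close> sq unfolding yedges_def by auto
    ultimately show ?thesis unfolding ysegment_def using side by (force simp: l1dist_def)
  qed
  moreover have "zsegment a b c \<in> bedges n Q" if "(a, b, c) \<in> zedges n Q" for a b c
  proof -
    let ?Fs = "{xsquare a b c, xsquare a (b-1) c, ysquare a b c, ysquare (a-1) b c}"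
    have "(a, b, c) \<in> F \<and> (a, b, c+1) \<in> F" if "F \<in> ?Fs" for F
      using that by (auto simp: xsquare_def ysquare_def)
    moreover have "\<exists>F \<in> ?Fs. F \<in> bfaces n Q"
      using \<open>(a, b, c) \<in> zedges n Q\<close> sq unfolding zedges_def by auto
    ultimately show ?thesis unfolding zsegment_def using side by (force simp: l1dist_def)
  qed
  ultimately show "?R \<subseteq> bedges n Q"
    by auto
qed

lemma mem_squares:
  "(x, y, z) \<in> xsquare a b c \<longleftrightarrow> a = x \<and> (b = y \<or> b = y - 1) \<and> (c = z \<or> c = z - 1)"
  "(x, y, z) \<in> ysquare a b c \<longleftrightarrow> (a = x \<or> a = x - 1) \<and> b = y \<and> (c = z \<or> c = z - 1)"
  "(x, y, z) \<in> zsquare a b c \<longleftrightarrow> (a = x \<or> a = x - 1) \<and> (b = y \<or> b = y - 1) \<and> c = z"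
  unfolding xsquare_def ysquare_def zsquare_def by auto

lemma bverts_eq: "bverts n Q = {(x, y, z).
    (x, y, z) \<in> xfaces n Q \<or> (x, y-1, z) \<in> xfaces n Q \<or>
    (x, y, z-1) \<in> xfaces n Q \<or> (x, y-1, z-1) \<in> xfaces n Q \<or>
    (x, y, z) \<in> yfaces n Q \<or> (x-1, y, z) \<in> yfaces n Q \<or>
    (x, y, z-1) \<in> yfaces n Q \<or> (x-1, y, z-1) \<in> yfaces n Q \<or>
    (x, y, z) \<in> zfaces n Q \<or> (x-1, y, z) \<in> zfaces n Q \<or>
    (x, y-1, z) \<in> zfaces n Q \<or> (x-1, y-1, z) \<in> zfaces n Q}"
  unfolding bverts_def bfaces_eq by (auto simp: mem_squares)

lemma inj_squares:
  "inj (\<lambda>(a, b, c). xsquare a b c)" "inj (\<lambda>(a, b, c). ysquare a b c)" "inj (\<lambda>(a, b, c). zsquare a b c)"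
  unfolding inj_def xsquare_def ysquare_def zsquare_def by (auto simp: times_eq_iff)

lemma squares_disjoint:
  "range (\<lambda>(a, b, c). xsquare a b c) \<inter> range (\<lambda>(a, b, c). ysquare a b c) = {}"
  "range (\<lambda>(a, b, c). xsquare a b c) \<inter> range (\<lambda>(a, b, c). zsquare a b c) = {}"
  "range (\<lambda>(a, b, c). ysquare a b c) \<inter> range (\<lambda>(a, b, c). zsquare a b c) = {}"
  unfolding xsquare_def ysquare_def zsquare_def by (auto simp: times_eq_iff)

lemma inj_segments:
  "inj (\<lambda>(a, b, c). xsegment a b c)" "inj (\<lambda>(a, b, c). ysegment a b c)" "inj (\<lambda>(a, b, c). zsegment a b c)"
  unfolding inj_def xsegment_def ysegment_def zsegment_def by (auto simp: doubleton_eq_iff)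

lemma segments_disjoint:
  "range (\<lambda>(a, b, c). xsegment a b c) \<inter> range (\<lambda>(a, b, c). ysegment a b c) = {}"
  "range (\<lambda>(a, b, c). xsegment a b c) \<inter> range (\<lambda>(a, b, c). zsegment a b c) = {}"
  "range (\<lambda>(a, b, c). ysegment a b c) \<inter> range (\<lambda>(a, b, c). zsegment a b c) = {}"
  unfolding xsegment_def ysegment_def zsegment_def by (auto simp: doubleton_eq_iff)

lemma cubes_subset:
  assumes "set Q \<subseteq> Pow {0..<n}"
  shows "cubes n Q \<subseteq> {0..<int n} \<times> {0..<int n} \<times> {0..<int (length Q)}"
proof
  fix p assume "p \<in> cubes n Q"
  then obtain a b c where p: "p = (a, b, c)" "0 \<le> a" "0 \<le> b" "0 \<le> c" "nat c < length Q"
    and slot: "nat b \<in> Q ! nat c \<and> a < int n \<or> nat a \<in> Q ! nat c \<and> b < int n"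
    unfolding cubes_def by blast
  have "Q ! nat c \<subseteq> {0..<n}" using assms nth_mem[OF p(5)] by blast
  with slot p show "p \<in> {0..<int n} \<times> {0..<int n} \<times> {0..<int (length Q)}" by auto
qed

lemma faces_subset_bverts: "xfaces n Q \<subseteq> bverts n Q" "yfaces n Q \<subseteq> bverts n Q" "zfaces n Q \<subseteq> bverts n Q"
  unfolding bverts_eq by auto

lemma edges_subset_bverts: "xedges n Q \<subseteq> bverts n Q" "yedges n Q \<subseteq> bverts n Q" "zedges n Q \<subseteq> bverts n Q"
  unfolding bverts_eq xedges_def yedges_def zedges_def by auto

lemma bverts_subset:
  assumes "set Q \<subseteq> Pow {0..<n}"
  shows "bverts n Q \<subseteq> {0..int n} \<times> {0..int n} \<times> {0..int (length Q)}"
proof -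
  have "F \<subseteq> {0..int n} \<times> {0..int n} \<times> {0..int (length Q)}" if "F \<in> bfaces n Q" for F
    using that cubes_subset[OF assms]
    unfolding bfaces_eq xfaces_def yfaces_def zfaces_def xsquare_def ysquare_def zsquare_def
    by fastforce
  then show ?thesis unfolding bverts_def by blast
qed

lemma finite_boundary_cells:
  assumes "set Q \<subseteq> Pow {0..<n}"
  shows "finite (bverts n Q)" "finite (xedges n Q)" "finite (yedges n Q)" "finite (zedges n Q)"
    "finite (xfaces n Q)" "finite (yfaces n Q)" "finite (zfaces n Q)"
proof -
  show fin: "finite (bverts n Q)"
    using bverts_subset[OF assms] by (rule finite_subset) simp
  show "finite (xedges n Q)" "finite (yedges n Q)" "finite (zedges n Q)"
    "finite (xfaces n Q)" "finite (yfaces n Q)" "finite (zfaces n Q)"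
    by (rule finite_subset[OF _ fin], rule edges_subset_bverts faces_subset_bverts)+
qed

lemma euler_char_eq:
  assumes "set Q \<subseteq> Pow {0..<n}"
  shows "euler_char n Q = int (card (bverts n Q))
    - int (card (xedges n Q) + card (yedges n Q) + card (zedges n Q))
    + int (card (xfaces n Q) + card (yfaces n Q) + card (zfaces n Q))"
  unfolding euler_char_def bfaces_eq bedges_eq
  by (subst (1 2) card_Un_image3)
    (simp_all add: finite_boundary_cells[OF assms] inj_squares squares_disjoint
      inj_segments segments_disjoint)

section \<open>Slicing by horizontal planes\<close>

definition slots :: "config \<Rightarrow> int \<Rightarrow> int set" where
  "slots Q c = {b. 0 \<le> b \<and> 0 \<le> c \<and> nat c < length Q \<and> nat b \<in> Q ! nat c}"

definition xspan :: "nat \<Rightarrow> config \<Rightarrow> int \<Rightarrow> int set" where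
  "xspan n Q c = (if even c then {0..<int n} else slots Q c)"
definition yspan :: "nat \<Rightarrow> config \<Rightarrow> int \<Rightarrow> int set" where
  "yspan n Q c = (if even c then slots Q c else {0..<int n})"

lemma mem_cubes: "(a, b, c) \<in> cubes n Q \<longleftrightarrow> a \<in> xspan n Q c \<and> b \<in> yspan n Q c"
  by (cases "0 \<le> c") (auto simp: cubes_def xspan_def yspan_def slots_def even_nat_iff)

lemma slots_subset: "set Q \<subseteq> Pow {0..<n} \<Longrightarrow> slots Q c \<subseteq> {0..<int n}"
  unfolding slots_def by (force dest: nth_mem)

definition zslice :: "point set \<Rightarrow> int \<Rightarrow> (int \<times> int) set" where
  "zslice T c = {(x, y). (x, y, c) \<in> T}"

lemma card_zslices:
  assumes "finite T" "\<And>x y z. (x, y, z) \<in> T \<Longrightarrow> 0 \<le> z \<and> z \<le> int L"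
  shows "card T = (\<Sum>i\<in>{0..L}. card (zslice T (int i)))"
proof -
  let ?lift = "\<lambda>(i, x, y). (x, y, int i)"
  let ?S = "SIGMA i:{0..L}. zslice T (int i)"
  have lift: "T = ?lift ` ?S"
  proof (intro equalityI subsetI)
    fix p assume "p \<in> T"
    moreover obtain x y z where "p = (x, y, z)" by (cases p)
    ultimately show "p \<in> ?lift ` ?S"
      using assms(2) by (force simp: zslice_def intro: rev_image_eqI[of "(nat z, x, y)"])
  qed (auto simp: zslice_def)
  have "inj_on ?lift ?S"
    by (auto simp: inj_on_def)
  then have "card T = card ?S"
    by (subst lift) (rule card_image)
  moreover have "finite (zslice T c)" for c
    using finite_imageI[OF assms(1), of "\<lambda>(x, y, z). (x, y)"]
    by (rule finite_subset[rotated]) (force simp: zslice_def)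
  ultimately show ?thesis
    by (simp add: card_SigmaI)
qed

lemma zslice_xfaces:
  "zslice (xfaces n Q) c = (covered_pts (xspan n Q c) - inner_pts (xspan n Q c)) \<times> yspan n Q c"
  unfolding zslice_def xfaces_def mem_cubes covered_pts_def inner_pts_def by auto

lemma zslice_yfaces:
  "zslice (yfaces n Q) c = xspan n Q c \<times> (covered_pts (yspan n Q c) - inner_pts (yspan n Q c))"
  unfolding zslice_def yfaces_def mem_cubes covered_pts_def inner_pts_def by auto

lemma zslice_zfaces:
  "zslice (zfaces n Q) c = xspan n Q (c-1) \<times> yspan n Q (c-1) \<union> xspan n Q c \<times> yspan n Q c
    - (xspan n Q (c-1) \<inter> xspan n Q c) \<times> (yspan n Q (c-1) \<inter> yspan n Q c)"
  unfolding zslice_def zfaces_def mem_cubes by auto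

lemma zslice_xedges:
  "zslice (xedges n Q) c =
    xspan n Q (c-1) \<times> covered_pts (yspan n Q (c-1)) \<union> xspan n Q c \<times> covered_pts (yspan n Q c)
    - (xspan n Q (c-1) \<inter> xspan n Q c) \<times> (inner_pts (yspan n Q (c-1)) \<inter> inner_pts (yspan n Q c))"
  unfolding zslice_def xedges_def yfaces_def zfaces_def mem_cubes covered_pts_def inner_pts_def
  by auto

lemma zslice_yedges:
  "zslice (yedges n Q) c =
    covered_pts (xspan n Q (c-1)) \<times> yspan n Q (c-1) \<union> covered_pts (xspan n Q c) \<times> yspan n Q c
    - (inner_pts (xspan n Q (c-1)) \<inter> inner_pts (xspan n Q c)) \<times> (yspan n Q (c-1) \<inter> yspan n Q c)"
  unfolding zslice_def yedges_def xfaces_def zfaces_def mem_cubes covered_pts_def inner_pts_def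
  by auto

lemma zslice_zedges:
  "zslice (zedges n Q) c = covered_pts (xspan n Q c) \<times> covered_pts (yspan n Q c)
    - inner_pts (xspan n Q c) \<times> inner_pts (yspan n Q c)"
  unfolding zslice_def zedges_def xfaces_def yfaces_def mem_cubes covered_pts_def inner_pts_def
  by auto

lemma zslice_bverts:
  "zslice (bverts n Q) c =
    covered_pts (xspan n Q (c-1)) \<times> covered_pts (yspan n Q (c-1)) \<union>
    covered_pts (xspan n Q c) \<times> covered_pts (yspan n Q c)
    - (inner_pts (xspan n Q (c-1)) \<inter> inner_pts (xspan n Q c)) \<times>
      (inner_pts (yspan n Q (c-1)) \<inter> inner_pts (yspan n Q c))"
  unfolding zslice_def bverts_eq xfaces_def yfaces_def zfaces_def mem_cubes covered_pts_def inner_pts_def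
  by auto

(* The cells whose lowest point lies in the plane z = c. *)
definition slice_euler :: "nat \<Rightarrow> config \<Rightarrow> int \<Rightarrow> int" where
  "slice_euler n Q c = int (card (zslice (bverts n Q) c))
    - int (card (zslice (xedges n Q) c)) - int (card (zslice (yedges n Q) c))
    - int (card (zslice (zedges n Q) c))
    + int (card (zslice (xfaces n Q) c)) + int (card (zslice (yfaces n Q) c))
    + int (card (zslice (zfaces n Q) c))"

lemma slice_euler_eq:
  assumes levels: "set Q \<subseteq> Pow {0..<n}" and "1 \<le> n"
  defines "r \<equiv> \<lambda>c. int (card (run_starts (slots Q c)))"
  shows "slice_euler n Q c = r (c-1) + r c - 2 * r (c-1) * r c"
proof -
  define S where "S = slots Q c"
  define S' where "S' = slots Q (c-1)"
  define F where "F = {0..<int n}"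
  have sub: "S \<subseteq> F" "S' \<subseteq> F"
    unfolding S_def S'_def F_def using slots_subset[OF levels] by auto
  have fin: "finite S" "finite S'" "finite F"
    using sub finite_subset unfolding F_def by auto
  note subs = sub covered_pts_mono[OF sub(1)] covered_pts_mono[OF sub(2)]
    inner_pts_mono[OF sub(1)] inner_pts_mono[OF sub(2)]
  note absorbs = subs[THEN Int_absorb1] subs[THEN Int_absorb2]
  note cards = card_covered_pts[OF fin(1)] card_inner_pts[OF fin(1)] card_covered_pts[OF fin(2)]
    card_inner_pts[OF fin(2)] card_covered_pts[OF fin(3)] card_inner_pts[OF fin(3)]
  note finites = fin finite_covered_pts[OF fin(1)] finite_covered_pts[OF fin(2)]
    finite_covered_pts[OF fin(3)]
  have inner_subs: "inner_pts S \<subseteq> covered_pts F" "inner_pts S' \<subseteq> covered_pts F"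
    using inner_pts_subset covered_pts_mono[OF sub(1)] covered_pts_mono[OF sub(2)] by blast+
  have runs_F: "int (card (run_starts F)) = 1" "int (card F) = int n"
    unfolding F_def using run_starts_interval[OF assms(2)] by simp_all
  \<comment> \<open>consecutive levels are perpendicular\<close>
  have "xspan n Q c = F \<and> yspan n Q c = S \<and> xspan n Q (c-1) = S' \<and> yspan n Q (c-1) = F \<or>
        xspan n Q c = S \<and> yspan n Q c = F \<and> xspan n Q (c-1) = F \<and> yspan n Q (c-1) = S'"
    unfolding xspan_def yspan_def S_def S'_def F_def by auto
  then show ?thesis
    unfolding slice_euler_def zslice_bverts zslice_xedges zslice_yedges zslice_zedges
      zslice_xfaces zslice_yfaces zslice_zfaces
    by (elim disjE conjE; simp only:;
        simp only: absorbs card_cartesian_product of_nat_mult card_covered_pts_Diff_inner_pts fin;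
        simp only: card_Times_Un_Diff card_Times_Diff finites inner_pts_subset sub inner_subs subset_refl;
        simp add: absorbs cards runs_F r_def S_def[symmetric] S'_def[symmetric] algebra_simps)
qed

lemma euler_char_slices:
  assumes levels: "set Q \<subseteq> Pow {0..<n}"
  shows "euler_char n Q = (\<Sum>i\<in>{0..length Q}. slice_euler n Q (int i))"
proof -
  have slices: "int (card T) = (\<Sum>i\<in>{0..length Q}. int (card (zslice T (int i))))"
    if "finite T" "T \<subseteq> bverts n Q" for T
  proof -
    have "0 \<le> z \<and> z \<le> int (length Q)" if "(x, y, z) \<in> T" for x y z
      using that \<open>T \<subseteq> bverts n Q\<close> bverts_subset[OF levels] by auto
    then have "card T = (\<Sum>i\<in>{0..length Q}. card (zslice T (int i)))"
      by (rule card_zslices[OF \<open>finite T\<close>])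
    then show ?thesis by simp
  qed
  show ?thesis
    unfolding euler_char_eq[OF levels] slice_euler_def of_nat_add
    using finite_boundary_cells[OF levels] edges_subset_bverts faces_subset_bverts
    by (simp add: slices sum.distrib sum_subtractf)
qed

definition runs :: "config \<Rightarrow> nat \<Rightarrow> nat" where
  "runs Q i = card (run_starts (slots Q (int i)))"

lemma sum_slice_euler:
  assumes "set Q \<subseteq> Pow {0..<n}" "1 \<le> n"
  shows "(\<Sum>i\<in>{0..m}. slice_euler n Q (int i)) =
    2 * (\<Sum>i<m. int (runs Q i)) + int (runs Q m) - 2 * (\<Sum>i<m. int (runs Q i * runs Q (Suc i)))"
proof (induction m)
  case 0
  have "slots Q (-1) = {}" by (simp add: slots_def)
  then show ?case
    using slice_euler_eq[OF assms, of 0] by (simp add: runs_def run_starts_def)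
next
  case (Suc m)
  have "slice_euler n Q (int (Suc m)) =
      int (runs Q m) + int (runs Q (Suc m)) - 2 * int (runs Q m * runs Q (Suc m))"
    using slice_euler_eq[OF assms, of "int (Suc m)"] by (simp add: runs_def)
  with Suc show ?case
    by (simp add: sum.atLeast0_atMost_Suc)
qed

lemma runs_length: "runs Q (length Q) = 0"
  by (simp add: runs_def slots_def run_starts_def)

lemma euler_char_runs:
  assumes "set Q \<subseteq> Pow {0..<n}" "1 \<le> n"
  shows "euler_char n Q =
    2 * (\<Sum>i<length Q. int (runs Q i)) - 2 * (\<Sum>i<length Q. int (runs Q i * runs Q (Suc i)))"
  using euler_char_slices[OF assms(1)] sum_slice_euler[OF assms, of "length Q"] runs_length by simp

lemma slots_nth: "i < length Q \<Longrightarrow> slots Q (int i) = int ` (Q ! i)"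
  unfolding slots_def by (auto intro: image_eqI[of _ _ "nat _"])

lemma runs_pos: "i < length Q \<Longrightarrow> finite (Q ! i) \<Longrightarrow> Q ! i \<noteq> {} \<Longrightarrow> 0 < runs Q i"
  unfolding runs_def slots_nth by (rule card_run_starts_pos) auto

lemma runs_le_card: "i < length Q \<Longrightarrow> finite (Q ! i) \<Longrightarrow> runs Q i \<le> card (Q ! i)"
  unfolding runs_def slots_nth using card_run_starts_le[of "int ` (Q ! i)"]
  by (simp add: card_image)

lemma runs_half: "set Q \<subseteq> Pow {0..<n} \<Longrightarrow> even n \<Longrightarrow> 2 * runs Q i \<le> n"
  unfolding runs_def by (rule card_run_starts_half[OF slots_subset])

lemma runs_full_level: "i < length Q \<Longrightarrow> Q ! i = {0..<n} \<Longrightarrow> 1 \<le> n \<Longrightarrow> runs Q i = 1"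
proof -
  assume "i < length Q" "Q ! i = {0..<n}" "1 \<le> n"
  moreover have "int ` {0..<n} = {0..<int n}"
    by (auto simp: image_iff intro!: bexI[of _ "nat _"])
  ultimately show ?thesis
    unfolding runs_def using run_starts_interval by (simp add: slots_nth)
qed

section \<open>Reachable configurations\<close>

(* The level below the top is full: it can lose a block only in a move that starts a new
   level.  That move makes it the third level from the top, and from then on every block it
   loses goes to the top level. *)
definition jenga_invariant :: "nat \<Rightarrow> nat \<Rightarrow> config \<Rightarrow> bool" where
  "jenga_invariant n k Q \<longleftrightarrow> set Q \<subseteq> Pow {0..<n} \<and> sum_list (map card Q) = n * k \<and> 3 \<le> length Q \<and>
     Q ! (length Q - 2) = {0..<n} \<and> n \<le> card (Q ! (length Q - 3)) + card (last Q)"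

lemma jenga_invariant_initial: "3 \<le> k \<Longrightarrow> jenga_invariant n k (initial_config n k)"
  unfolding jenga_invariant_def initial_config_def by (auto simp: sum_list_replicate)

lemma remove_block:
  fixes Q :: config
  assumes "set Q \<subseteq> Pow {0..<n}" "i < length Q" "j \<in> Q ! i"
  shows "set (Q[i := Q ! i - {j}]) \<subseteq> Pow {0..<n}"
    and "sum_list (map card (Q[i := Q ! i - {j}])) + 1 = sum_list (map card Q)"
    and "card (Q ! t) \<le> card (Q[i := Q ! i - {j}] ! t) + 1"
proof -
  have "Q ! i \<subseteq> {0..<n}"
    using assms(1) nth_mem[OF assms(2)] by blast
  then have fin: "finite (Q ! i)"
    by (rule finite_subset) simp
  with assms(3) have card_i: "card (Q ! i - {j}) + 1 = card (Q ! i)"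
    using card_Suc_Diff1 by fastforce
  show "set (Q[i := Q ! i - {j}]) \<subseteq> Pow {0..<n}"
    using set_update_subset_insert[of Q i] assms(1) \<open>Q ! i \<subseteq> {0..<n}\<close> by blast
  have "card (Q ! i) \<le> sum_list (map card Q)"
    using elem_le_sum_list[of i "map card Q"] assms(2) by simp
  then show "sum_list (map card (Q[i := Q ! i - {j}])) + 1 = sum_list (map card Q)"
    using assms(2) card_i by (simp add: map_update sum_list_update)
  show "card (Q ! t) \<le> card (Q[i := Q ! i - {j}] ! t) + 1"
    using card_i assms(2) by (cases "t = i") auto
qed

lemma jenga_invariant_fill_top:
  assumes inv: "jenga_invariant n k Q"
    and move: "i < length Q - 2" "j \<in> Q ! i" "s < n" "s \<notin> last Q"
  shows "jenga_invariant n k (butlast (Q[i := Q ! i - {j}]) @ [insert s (last Q)])"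
proof -
  let ?L = "length Q"
  define Q1 where "Q1 = Q[i := Q ! i - {j}]"
  define Q' where "Q' = butlast Q1 @ [insert s (last Q)]"
  from inv have levels: "set Q \<subseteq> Pow {0..<n}" and total: "sum_list (map card Q) = n * k"
    and len: "3 \<le> ?L" and full: "Q ! (?L - 2) = {0..<n}"
    and cover: "n \<le> card (Q ! (?L - 3)) + card (last Q)"
    unfolding jenga_invariant_def by auto
  have "i < ?L"
    using move(1) by simp
  note Q1 = remove_block[OF levels this move(2), folded Q1_def]
  have len': "length Q1 = ?L" "length Q' = ?L"
    using len by (simp_all add: Q'_def Q1_def)
  have nth': "Q' ! t = Q1 ! t" if "t < ?L - 1" for t
    using that len by (simp add: Q'_def Q1_def nth_append nth_butlast)
  have last_Q1: "last Q1 = last Q"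
    using move(1) len by (subst Q1_def, subst last_list_update) auto
  have "last Q \<in> set Q"
    using len by (intro last_in_set) auto
  with levels have "last Q \<subseteq> {0..<n}"
    by blast
  then have top: "insert s (last Q) \<subseteq> {0..<n}" "card (insert s (last Q)) = card (last Q) + 1"
    using move(3,4) finite_subset[OF \<open>last Q \<subseteq> {0..<n}\<close>] by auto
  have "Q1 \<noteq> []"
    using len len' by auto
  then have "sum_list (map card Q1) = sum_list (map card (butlast Q1)) + card (last Q)"
    using sum_list_map_butlast last_Q1 by metis
  then have "sum_list (map card Q') = n * k"
    using Q1(2) total top(2) by (simp add: Q'_def)
  moreover have "set Q' \<subseteq> Pow {0..<n}"
    using Q1(1) top(1) in_set_butlastD[of _ Q1] by (auto simp: Q'_def)
  moreover have "Q' ! (?L - 2) = {0..<n}"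
    using nth'[of "?L - 2"] full move(1) len by (simp add: Q1_def)
  moreover have "n \<le> card (Q' ! (?L - 3)) + card (last Q')"
    using nth'[of "?L - 3"] Q1(3)[of "?L - 3"] cover top(2) len by (simp add: Q'_def)
  ultimately show ?thesis
    using len len' unfolding jenga_invariant_def Q'_def Q1_def by simp
qed

lemma jenga_invariant_new_top:
  assumes inv: "jenga_invariant n k Q"
    and move: "i < length Q - 1" "j \<in> Q ! i" "s < n" "\<not> card (last Q) < n"
  shows "jenga_invariant n k (Q[i := Q ! i - {j}] @ [{s}])"
proof -
  let ?L = "length Q"
  define Q1 where "Q1 = Q[i := Q ! i - {j}]"
  define Q' where "Q' = Q1 @ [{s}]"
  from inv have levels: "set Q \<subseteq> Pow {0..<n}" and total: "sum_list (map card Q) = n * k"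
    and len: "3 \<le> ?L" and full: "Q ! (?L - 2) = {0..<n}"
    unfolding jenga_invariant_def by auto
  have "i < ?L"
    using move(1) by simp
  note Q1 = remove_block[OF levels this move(2), folded Q1_def]
  have len': "length Q' = ?L + 1"
    by (simp add: Q'_def Q1_def)
  have nth': "Q' ! t = Q1 ! t" if "t < ?L" for t
    using that by (simp add: Q'_def Q1_def nth_append)
  have "last Q \<in> set Q"
    using len by (intro last_in_set) auto
  with levels have "last Q \<subseteq> {0..<n}"
    by blast
  moreover from this have "card (last Q) = n"
    using move(4) card_mono[of "{0..<n}" "last Q"] by simp
  ultimately have "last Q = {0..<n}"
    using card_subset_eq[of "{0..<n}" "last Q"] by simp
  moreover have "Q \<noteq> []"
    using len by auto
  ultimately have top_full: "Q ! (?L - 1) = {0..<n}"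
    by (simp add: last_conv_nth)
  have "set Q' \<subseteq> Pow {0..<n}"
    using Q1(1) move(3) by (simp add: Q'_def)
  moreover have "sum_list (map card Q') = n * k"
    using Q1(2) total by (simp add: Q'_def)
  moreover have "Q' ! (length Q' - 2) = {0..<n}"
    using nth'[of "?L - 1"] top_full move(1) len len' by (simp add: Q1_def)
  moreover have "n \<le> card (Q' ! (length Q' - 3)) + card (last Q')"
    using nth'[of "?L - 2"] Q1(3)[of "?L - 2"] full len len' by (simp add: Q'_def)
  ultimately show ?thesis
    using len len' unfolding jenga_invariant_def Q'_def Q1_def by simp
qed

lemma jenga_invariant_step:
  assumes "jenga_invariant n k Q" "jenga_move n Q Q'"
  shows "jenga_invariant n k Q'"
proof -
  obtain i j s
    where move: "i < length Q - 1" "card (last Q) < n \<longrightarrow> i \<noteq> length Q - 2" "j \<in> Q ! i" "s < n"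
    and Q': "if card (last Q) < n
      then s \<notin> last Q \<and> Q' = butlast (Q[i := Q ! i - {j}]) @ [insert s (last Q)]
      else Q' = Q[i := Q ! i - {j}] @ [{s}]"
    using assms(2) unfolding jenga_move_def Let_def by blast
  show ?thesis
  proof (cases "card (last Q) < n")
    case True
    with move have "i < length Q - 2"
      by simp
    with True Q' move show ?thesis
      using jenga_invariant_fill_top[OF assms(1)] by simp
  next
    case False
    with Q' move show ?thesis
      using jenga_invariant_new_top[OF assms(1)] by simp
  qed
qed

lemma jenga_invariant_reachable:
  "(jenga_move n)\<^sup>*\<^sup>* (initial_config n k) Q \<Longrightarrow> 3 \<le> k \<Longrightarrow> jenga_invariant n k Q"
  by (induction rule: rtranclp_induct) (auto intro: jenga_invariant_initial jenga_invariant_step)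

lemma runs_sum_bound:
  fixes r a :: "nat \<Rightarrow> int" and m :: nat and n k :: int
  assumes "r (m+3) = 0" "r (m+1) = 1" "\<And>i. i < m+3 \<Longrightarrow> 1 \<le> r i" "\<And>i. i < m+3 \<Longrightarrow> 2 * r i \<le> n"
    "\<And>i. i < m \<Longrightarrow> r i \<le> a i" "(\<Sum>i<m. a i) \<le> n * (k - 2)" "2 \<le> n"
  shows "2 - 2 * (\<Sum>i<m+3. r i) + 2 * (\<Sum>i<m+3. r i * r (Suc i)) \<le> n * (n - 2) * (k - 2)"
proof -
  have top: "(\<Sum>i<m+3. r i * r (Suc i) - r i) = (\<Sum>i<m. r i * r (Suc i) - r i) - 1"
    using assms(1,2) by (simp add: numeral_3_eq_3 algebra_simps)
  have "2 * (r i * r (Suc i) - r i) \<le> (n - 2) * a i" if "i < m" for i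
  proof -
    have "0 \<le> r i" "0 \<le> 2 * r (Suc i) - 2" "2 * r (Suc i) - 2 \<le> n - 2"
      using assms(3)[of i] assms(3)[of "Suc i"] assms(4)[of "Suc i"] that by auto
    then have "r i * (2 * r (Suc i) - 2) \<le> a i * (n - 2)"
      using assms(5)[OF that] by (intro mult_mono) auto
    then show ?thesis
      by (simp add: algebra_simps)
  qed
  then have "2 * (\<Sum>i<m. r i * r (Suc i) - r i) \<le> (n - 2) * (\<Sum>i<m. a i)"
    unfolding sum_distrib_left by (rule sum_mono) simp
  also have "\<dots> \<le> (n - 2) * (n * (k - 2))"
    using assms(6,7) by (simp add: mult_left_mono)
  finally have "2 * (\<Sum>i<m. r i * r (Suc i) - r i) \<le> (n - 2) * (n * (k - 2))" .
  moreover have "2 - 2 * (\<Sum>i<m+3. r i) + 2 * (\<Sum>i<m+3. r i * r (Suc i)) =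
      2 + 2 * (\<Sum>i<m+3. r i * r (Suc i) - r i)"
    by (simp add: sum_subtractf algebra_simps)
  ultimately show ?thesis
    unfolding top by (simp add: algebra_simps)
qed

lemma two_minus_euler_char_le:
  assumes inv: "jenga_invariant n k Q" and nonempty: "\<forall>i < length Q. Q ! i \<noteq> {}"
    and n: "even n" "2 \<le> n"
  shows "2 - euler_char n Q \<le> int n * (int n - 2) * (int k - 2)"
proof -
  from inv have levels: "set Q \<subseteq> Pow {0..<n}" and total: "sum_list (map card Q) = n * k"
    and len: "3 \<le> length Q" and full: "Q ! (length Q - 2) = {0..<n}"
    and cover: "n \<le> card (Q ! (length Q - 3)) + card (last Q)"
    unfolding jenga_invariant_def by auto
  define m where "m = length Q - 3"
  define r where "r i = int (runs Q i)" for i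
  define a where "a i = int (card (Q ! i))" for i
  have L: "length Q = m + 3"
    using len m_def by simp
  have fin: "finite (Q ! i)" if "i < length Q" for i
    using levels nth_mem[OF that] finite_subset by blast
  have "(\<Sum>i<m+3. card (Q ! i)) = n * k"
    using total by (simp add: sum_list_sum_nth atLeast0LessThan L)
  then have "(\<Sum>i<m+3. a i) = int n * int k"
    unfolding a_def by (metis of_nat_mult of_nat_sum)
  moreover have "Q \<noteq> []"
    using len by auto
  then have "a (m+1) = int n" "int n \<le> a m + a (m+2)"
    using full cover L unfolding a_def by (auto simp: numeral_3_eq_3 last_conv_nth)
  ultimately have "(\<Sum>i<m. a i) \<le> int n * (int k - 2)"
    by (simp add: numeral_3_eq_3 algebra_simps)
  then have "2 - 2 * (\<Sum>i<m+3. r i) + 2 * (\<Sum>i<m+3. r i * r (Suc i)) \<le> int n * (int n - 2) * (int k - 2)"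
  proof (rule runs_sum_bound[rotated 5])
    show "r (m+3) = 0" "r (m+1) = 1"
      using runs_length[of Q] runs_full_level[of "m+1" Q n] full n(2) L unfolding r_def by simp_all
    show "1 \<le> r i" "2 * r i \<le> int n" if "i < m+3" for i
      using runs_pos[of i Q] runs_half[OF levels n(1), of i] fin nonempty that L unfolding r_def by auto
    show "r i \<le> a i" if "i < m" for i
      using runs_le_card[of i Q] fin that L unfolding r_def a_def by simp
  qed (use n in simp)
  then show ?thesis
    using euler_char_runs[OF levels] n(2) unfolding L r_def by simp
qed

theorem mainTheorem5:
  fixes n k :: nat and Q :: config
  assumes "n \<ge> 2" and "even n" and "k \<ge> 3" and "jenga_like n k Q"
  shows "genus n Q \<le> real (n * (n - 2) * (k - 2)) / 2"
proof -
  have "jenga_invariant n k Q" "\<forall>i < length Q. Q ! i \<noteq> {}"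
    using assms(3,4) jenga_invariant_reachable unfolding jenga_like_def by blast+
  then have "2 - euler_char n Q \<le> int n * (int n - 2) * (int k - 2)"
    using two_minus_euler_char_le assms(1,2) by blast
  also have "\<dots> = int (n * (n - 2) * (k - 2))"
    using assms(1,3) by (simp add: of_nat_diff)
  finally have "real_of_int (2 - euler_char n Q) \<le> real_of_int (int (n * (n - 2) * (k - 2)))"
    by (simp only: of_int_le_iff)
  then show ?thesis
    unfolding genus_def by simp
qed

end
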